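(* Let $n\geq3$ and let $\sigma:\mathbb{R}\to\mathbb{R}$ be an increasing odd homeomorphism. Let $x=(x_1,\dots,x_n)\in\mathbb{R}^n$ and suppose there exist $i<j$ in $\{1,\dots,n\}$ such that $x_ix_j<0$ and $(x_i,x_j)$ is $\sigma$-irrational in $\mathbb{R}^2$. Then the orbit $\mathcal M(\sigma,n)x=\{m(x):m\in\mathcal M(\sigma,n)\}$ is dense in $\mathbb{R}^n$.
   Context: For $1\leq i<j\leq n$ define $h_{i,j},v_{i,j}:\mathbb{R}^n\to\mathbb{R}^n$ by $h_{i,j}(x)=x+\sigma^{-1}(x_j)e_i$ and $v_{i,j}(x)=x+\sigma(x_i)e_j$ (only the $i$-th, resp. $j$-th, coordinate changes), where $(e_k)$ is the standard basis. $\mathcal M(\sigma,n)$ is the monoid generated by all $h_{i,j},v_{i,j}$, $1\le i<j\le n$. In $\mathbb{R}^2$, with $h_\sigma(x,y)=(x+\sigma^{-1}(y),y)$, $v_\sigma(x,y)=(x,\sigma(x)+y)$, the $\sigma$-rational lines are: the axes $Ox=\mathbb{R}\times\{0\}$, $Oy=\{0\}\times\mathbb{R}$; the sets $m(Ox)$ with $m$ in the monoid generated by $h_\sigma,v_\sigma$; and the sets $m(Oy)$ with $m$ in the monoid generated by $h_\sigma^{-1},v_\sigma^{-1}$. A point of $\mathbb{R}^2$ is $\sigma$-irrational if it lies on no $\sigma$-rational line. *)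

theory Defs
  imports "HOL-Analysis.Analysis"
begin

inductive_set monoid_gen :: "('a \<Rightarrow> 'a) set \<Rightarrow> ('a \<Rightarrow> 'a) set"
  for G :: "('a \<Rightarrow> 'a) set" where
  id_mem: "id \<in> monoid_gen G"
| comp_mem: "g \<in> G \<Longrightarrow> m \<in> monoid_gen G \<Longrightarrow> g \<circ> m \<in> monoid_gen G"

definition hmap :: "(real \<Rightarrow> real) \<Rightarrow> 'n::{finite,linorder} \<Rightarrow> 'n::{finite,linorder} \<Rightarrow> real^'n::{finite,linorder} \<Rightarrow> real^'n::{finite,linorder}" where
  "hmap \<sigma> i j = (\<lambda>x. x + inv \<sigma> (x $ j) *\<^sub>R axis i 1)"

definition vmap :: "(real \<Rightarrow> real) \<Rightarrow> 'n::{finite,linorder} \<Rightarrow> 'n::{finite,linorder} \<Rightarrow> real^'n::{finite,linorder} \<Rightarrow> real^'n::{finite,linorder}" where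
  "vmap \<sigma> i j = (\<lambda>x. x + \<sigma> (x $ i) *\<^sub>R axis j 1)"

definition Msig :: "(real \<Rightarrow> real) \<Rightarrow> (real^'n::{finite,linorder} \<Rightarrow> real^'n::{finite,linorder}) set" where
  "Msig \<sigma> = monoid_gen ({hmap \<sigma> i j | i j. i < j} \<union> {vmap \<sigma> i j | i j. i < j})"

definition h_sig :: "(real \<Rightarrow> real) \<Rightarrow> real \<times> real \<Rightarrow> real \<times> real" where
  "h_sig \<sigma> = (\<lambda>(x, y). (x + inv \<sigma> y, y))"

definition v_sig :: "(real \<Rightarrow> real) \<Rightarrow> real \<times> real \<Rightarrow> real \<times> real" where
  "v_sig \<sigma> = (\<lambda>(x, y). (x, \<sigma> x + y))"

definition h_sig_inv :: "(real \<Rightarrow> real) \<Rightarrow> real \<times> real \<Rightarrow> real \<times> real" where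
  "h_sig_inv \<sigma> = (\<lambda>(x, y). (x - inv \<sigma> y, y))"

definition v_sig_inv :: "(real \<Rightarrow> real) \<Rightarrow> real \<times> real \<Rightarrow> real \<times> real" where
  "v_sig_inv \<sigma> = (\<lambda>(x, y). (x, y - \<sigma> x))"

definition Ox :: "(real \<times> real) set" where "Ox = UNIV \<times> {0}"
definition Oy :: "(real \<times> real) set" where "Oy = {0} \<times> UNIV"

definition rational_lines :: "(real \<Rightarrow> real) \<Rightarrow> (real \<times> real) set set" where
  "rational_lines \<sigma> = {Ox, Oy}
     \<union> {m ` Ox | m. m \<in> monoid_gen {h_sig \<sigma>, v_sig \<sigma>}}
     \<union> {m ` Oy | m. m \<in> monoid_gen {h_sig_inv \<sigma>, v_sig_inv \<sigma>}}"

definition sigma_irrational :: "(real \<Rightarrow> real) \<Rightarrow> real \<times> real \<Rightarrow> bool" where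
  "sigma_irrational \<sigma> p \<longleftrightarrow> (\<forall>L \<in> rational_lines \<sigma>. p \<notin> L)"

end

theory Submission
  imports Defs
begin

(*
  The planar orbit of the sigma-irrational pair (x_i, x_j) never meets the vertical axis (a
  point on it would put (x_i, x_j) on a rational line m'(Oy)), and minimising |a| + |b| over its
  points (a, b) in the fourth quadrant shows that it comes arbitrarily close to the origin.
  Lifted to R^n, this gives orbit points whose i-th and j-th coordinates are tiny and of opposite
  signs; integer multiples of the correspondingly tiny moves bring every other coordinate, and
  then the i-th one, as close as we like to any target, so the orbit closure contains the slab
  {w. w_j = 0, w_i < 0}.  A third index k fills in the j-th coordinate: for y_i < 0 < y_k the
  ratios (y_j + K |sigma(y_i)|) / N are dense in (0, oo), which makes y a limit of images of slab
  points.  Every z with z_j <> 0 is the image of such a y under two powers of elementary moves,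
  and closedness gives the hyperplane z_j = 0 as well.  The case x_i < 0 follows by oddness.
*)

lemma monoid_gen_comp:
  assumes "m1 \<in> monoid_gen G" "m2 \<in> monoid_gen G"
  shows "m1 \<circ> m2 \<in> monoid_gen G"
  using assms(1)
proof induction
  case id_mem
  then show ?case using assms(2) by simp
next
  case (comp_mem g m)
  then show ?case by (metis comp_assoc monoid_gen.comp_mem)
qed

lemma monoid_gen_generator: "g \<in> G \<Longrightarrow> g \<in> monoid_gen G"
  using monoid_gen.comp_mem[OF _ monoid_gen.id_mem] by fastforce

lemma monoid_gen_funpow: "f \<in> monoid_gen G \<Longrightarrow> f ^^ n \<in> monoid_gen G"
  by (induction n) (auto intro: monoid_gen.id_mem monoid_gen_comp)

lemma monoid_gen_commute:
  assumes "m \<in> monoid_gen G" and "\<And>g y. g \<in> G \<Longrightarrow> g (f y) = f (g y)"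
  shows "m (f y) = f (m y)"
  using assms(1) by (induction arbitrary: y) (simp_all add: assms(2))

lemma monoid_gen_continuous:
  assumes "m \<in> monoid_gen G" and "\<And>g. g \<in> G \<Longrightarrow> continuous_on UNIV g"
  shows "continuous_on UNIV m"
  using assms(1)
proof induction
  case id_mem
  then show ?case by (simp add: continuous_on_id)
next
  case (comp_mem g m)
  then show ?case by (metis assms(2) continuous_on_compose continuous_on_subset subset_UNIV)
qed

lemma monoid_gen_left_inverse:
  assumes "m \<in> monoid_gen G" and "\<And>g. g \<in> G \<Longrightarrow> \<exists>g'\<in>H. \<forall>y. g' (g y) = y"
  shows "\<exists>m'\<in>monoid_gen H. \<forall>y. m' (m y) = y"
  using assms(1)
proof induction
  case id_mem
  show ?case by (intro bexI[of _ id] monoid_gen.id_mem) simp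
next
  case (comp_mem g m)
  then obtain m' g' where m': "m' \<in> monoid_gen H" "\<forall>y. m' (m y) = y"
    and g': "g' \<in> H" "\<forall>y. g' (g y) = y"
    using assms(2) by blast
  have "m' \<circ> g' \<in> monoid_gen H"
    using monoid_gen_comp[OF m'(1) monoid_gen_generator[OF g'(1)]] .
  then show ?case
    using m'(2) g'(2) by (intro bexI[of _ "m' \<circ> g'"]) auto
qed

lemma exists_nat_remainder_pos:
  fixes a d :: real
  assumes "0 < a" "0 < d"
  shows "\<exists>k::nat. 0 < a - real k * d \<and> a - real k * d \<le> d"
proof -
  define k where "k = nat (\<lceil>a / d\<rceil> - 1)"
  have "real k < a / d" "a / d \<le> real k + 1"
    using assms unfolding k_def by simp_all linarith+
  then show ?thesis
    using assms by (intro exI[of _ k]) (simp add: field_simps)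
qed

lemma exists_nat_mult_approx:
  fixes c d g :: real
  assumes "d \<noteq> 0" "0 \<le> (g - c) * d"
  shows "\<exists>N::nat. \<bar>c + real N * d - g\<bar> < \<bar>d\<bar>"
proof -
  define r where "r = (g - c) / d"
  have "0 \<le> r"
    using assms unfolding r_def by (simp add: zero_le_divide_iff zero_le_mult_iff)
  define N where "N = nat \<lfloor>r\<rfloor>"
  have N: "real N \<le> r" "r < real N + 1"
    using \<open>0 \<le> r\<close> unfolding N_def by linarith+
  have "c + real N * d - g = (real N - r) * d"
    using assms(1) unfolding r_def by (simp add: field_simps)
  then have "\<bar>c + real N * d - g\<bar> = (r - real N) * \<bar>d\<bar>"
    using N by (simp add: abs_mult)
  also have "\<dots> < \<bar>d\<bar>"
    using N assms(1) by simp
  finally show ?thesis ..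
qed

lemma exists_nat_ratio_approx:
  fixes c v u e :: real
  assumes "0 < v" "0 < u" "0 < e"
  shows "\<exists>N::nat. \<exists>K::nat. 0 < N \<and> \<bar>(c + real K * v) / real N - u\<bar> < e"
proof -
  obtain N :: nat where N: "max (v / e) (c / u) < real N"
    using reals_Archimedean2 by blast
  have "0 < real N"
    using N assms by (smt (verit) divide_pos_pos)
  have "v < real N * e" "c < real N * u"
    using N assms by (simp_all add: field_simps)
  then obtain K :: nat where K: "\<bar>c + real K * v - real N * u\<bar> < v"
    using exists_nat_mult_approx[of v "real N * u" c] assms by auto
  have "\<bar>(c + real K * v) / real N - u\<bar> = \<bar>c + real K * v - real N * u\<bar> / real N"
    using \<open>0 < real N\<close> by (simp add: field_simps)
  also have "\<dots> < e"
    using K \<open>v < real N * e\<close> \<open>0 < real N\<close> by (simp add: field_simps)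
  finally have "\<bar>(c + real K * v) / real N - u\<bar> < e" .
  moreover have "0 < N"
    using \<open>0 < real N\<close> by simp
  ultimately show ?thesis
    by blast
qed

lemma exists_near_minimiser:
  fixes f :: "'a \<Rightarrow> real"
  assumes "x \<in> S" "\<And>y. y \<in> S \<Longrightarrow> c \<le> f y" "0 < \<eta>"
  shows "\<exists>x\<in>S. \<forall>y\<in>S. f x < f y + \<eta>"
proof -
  have bdd: "bdd_below (f ` S)"
    using assms(2) by (intro bdd_belowI[of _ c]) auto
  have "Inf (f ` S) < Inf (f ` S) + \<eta>"
    using assms(3) by simp
  then obtain x where "x \<in> S" "f x < Inf (f ` S) + \<eta>"
    using cInf_less_iff[OF _ bdd] assms(1) by blast
  moreover have "Inf (f ` S) \<le> f y" if "y \<in> S" for y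
    using that bdd by (simp add: cInf_lower)
  ultimately show ?thesis
    by (meson add_le_cancel_right less_le_trans)
qed

lemma mem_closure_if_coordinatewise_approachable:
  fixes w :: "real^'n"
  assumes "\<And>e. 0 < e \<Longrightarrow> \<exists>z\<in>A. \<forall>l. \<bar>z $ l - w $ l\<bar> < e"
  shows "w \<in> closure A"
  unfolding closure_approachable
proof (intro allI impI)
  fix \<epsilon> :: real
  assume "0 < \<epsilon>"
  then obtain z where "z \<in> A" and z: "\<And>l. \<bar>z $ l - w $ l\<bar> < \<epsilon> / CARD('n)"
    using assms[of "\<epsilon> / CARD('n)"] by auto
  have "dist z w \<le> (\<Sum>l\<in>UNIV. \<bar>(z - w) $ l\<bar>)"
    unfolding dist_norm by (rule norm_le_l1_cart)
  also have "\<dots> < (\<Sum>l\<in>(UNIV::'n set). \<epsilon> / CARD('n))"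
    using z by (intro sum_strict_mono) auto
  also have "\<dots> = \<epsilon>"
    by simp
  finally show "\<exists>z\<in>A. dist z w < \<epsilon>"
    using \<open>z \<in> A\<close> by blast
qed

lemma closed_coordinate_line_vimage:
  fixes S :: "(real^'n) set"
  assumes "closed S" "continuous_on UNIV f"
  shows "closed {c. (\<chi> l. if l = k then f c else y $ l) \<in> S}"
proof -
  have "continuous_on UNIV (\<lambda>c. \<chi> l. if l = k then f c else y $ l)"
  proof (intro continuous_on_vec_lambda)
    show "continuous_on UNIV (\<lambda>c. if l = k then f c else y $ l)" for l
      using assms(2) by (cases "l = k") simp_all
  qed
  from closed_vimage_Int[OF assms(1) this closed_UNIV] show ?thesis
    by (simp add: vimage_def)
qed

lemma closure_eq_UNIV_if_coordinate_nonzero: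
  fixes A :: "(real^'n) set"
  assumes "\<And>z. z $ j \<noteq> 0 \<Longrightarrow> z \<in> closure A"
  shows "closure A = UNIV"
proof -
  have "z \<in> closure A" for z
  proof -
    define C where "C = {c. (\<chi> l. if l = j then c else z $ l) \<in> closure A}"
    have "closed C"
      unfolding C_def by (rule closed_coordinate_line_vimage[OF closed_closure continuous_on_id])
    moreover have "{..<0} \<union> {0<..} \<subseteq> C"
      unfolding C_def by (auto intro: assms)
    ultimately have "closure ({..<0} \<union> {0<..}) \<subseteq> C"
      by (rule closure_minimal[rotated])
    then have "z $ j \<in> C"
      by (cases "0 \<le> z $ j") (auto simp: closure_Un)
    moreover have "(\<chi> l. if l = j then z $ j else z $ l) = z"
      by (simp add: vec_eq_iff)
    ultimately show ?thesis
      unfolding C_def by simp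
  qed
  then show ?thesis
    by auto
qed

lemma closure_uminus_eq_UNIV:
  fixes A :: "'a::real_normed_vector set"
  assumes "closure (uminus ` A) = UNIV"
  shows "closure A = UNIV"
proof -
  have "y \<in> closure A" for y
    unfolding closure_approachable
  proof (intro allI impI)
    fix \<epsilon> :: real
    assume "0 < \<epsilon>"
    moreover have "- y \<in> closure (uminus ` A)"
      using assms by simp
    ultimately obtain z where "z \<in> A" "dist (- z) (- y) < \<epsilon>"
      unfolding closure_approachable by blast
    then show "\<exists>z\<in>A. dist z y < \<epsilon>"
      by (auto simp: dist_minus)
  qed
  then show ?thesis
    by auto
qed

lemma exists_third_index:
  assumes "3 \<le> CARD('n)"
  shows "\<exists>k::'n. k \<noteq> i \<and> k \<noteq> j"
proof -
  have "card {i, j} < CARD('n)"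
    using assms by (simp add: card_insert_if)
  then have "{i, j} \<noteq> UNIV"
    by auto
  then show ?thesis
    by blast
qed

definition move_fun :: "(real \<Rightarrow> real) \<Rightarrow> 'n::linorder \<Rightarrow> 'n::linorder \<Rightarrow> real \<Rightarrow> real" where
  "move_fun \<sigma> s t = (if s < t then \<sigma> else inv \<sigma>)"

text \<open>The generators of \<open>Msig \<sigma>\<close> under a single name: both v_{s,t} (for s < t) and h_{t,s}
  (for t < s) add \<open>move_fun \<sigma> s t (y $ s)\<close> to the t-th coordinate of y.\<close>

definition elementary_move ::
    "(real \<Rightarrow> real) \<Rightarrow> 'n::{finite,linorder} \<Rightarrow> 'n::{finite,linorder} \<Rightarrow>
      real^'n::{finite,linorder} \<Rightarrow> real^'n::{finite,linorder}" where
  "elementary_move \<sigma> s t = (if s < t then vmap \<sigma> s t else hmap \<sigma> t s)"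

lemma elementary_move_nth:
  "s \<noteq> t \<Longrightarrow>
    elementary_move \<sigma> s t y $ l = (if l = t then y $ t + move_fun \<sigma> s t (y $ s) else y $ l)"
  by (cases "s < t") (auto simp: elementary_move_def vmap_def hmap_def move_fun_def axis_def)

lemma elementary_move_funpow_nth:
  "s \<noteq> t \<Longrightarrow>
    (elementary_move \<sigma> s t ^^ N) y $ l =
      (if l = t then y $ t + real N * move_fun \<sigma> s t (y $ s) else y $ l)"
  by (induction N arbitrary: l) (auto simp: elementary_move_nth algebra_simps)

lemma elementary_move_in_Msig:
  assumes "s \<noteq> t"
  shows "elementary_move \<sigma> s t \<in> Msig \<sigma>"
proof -
  have "elementary_move \<sigma> s t \<in> {hmap \<sigma> i j |i j. i < j} \<union> {vmap \<sigma> i j |i j. i < j}"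
    using assms unfolding elementary_move_def by (cases s t rule: linorder_cases) auto
  then show ?thesis
    unfolding Msig_def by (rule monoid_gen_generator)
qed

lemma Msig_comp: "m1 \<in> Msig \<sigma> \<Longrightarrow> m2 \<in> Msig \<sigma> \<Longrightarrow> m1 \<circ> m2 \<in> Msig \<sigma>"
  unfolding Msig_def by (rule monoid_gen_comp)

lemma elementary_move_funpow_in_Msig:
  assumes "s \<noteq> t"
  shows "elementary_move \<sigma> s t ^^ N \<in> Msig \<sigma>"
  using elementary_move_in_Msig[OF assms] unfolding Msig_def by (rule monoid_gen_funpow)

definition orbit ::
    "(real \<Rightarrow> real) \<Rightarrow> real^'n::{finite,linorder} \<Rightarrow> (real^'n::{finite,linorder}) set" where
  "orbit \<sigma> x = (\<lambda>m. m x) ` Msig \<sigma>"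

lemma orbit_closed:
  assumes "y \<in> orbit \<sigma> x" "m \<in> Msig \<sigma>"
  shows "m y \<in> orbit \<sigma> x"
proof -
  obtain m' where m': "m' \<in> Msig \<sigma>" "y = m' x"
    using assms(1) unfolding orbit_def by blast
  show ?thesis
    unfolding orbit_def using m'(2) Msig_comp[OF assms(2) m'(1)]
    by (intro image_eqI[of _ _ "m \<circ> m'"]) simp_all
qed

definition planar_orbit :: "(real \<Rightarrow> real) \<Rightarrow> real \<times> real \<Rightarrow> (real \<times> real) set" where
  "planar_orbit \<sigma> p = (\<lambda>m. m p) ` monoid_gen {h_sig \<sigma>, v_sig \<sigma>}"

lemma planar_orbit_self: "p \<in> planar_orbit \<sigma> p"
  unfolding planar_orbit_def by (rule rev_image_eqI[OF monoid_gen.id_mem]) simp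

lemma planar_orbit_closed:
  assumes "q \<in> planar_orbit \<sigma> p" "m \<in> monoid_gen {h_sig \<sigma>, v_sig \<sigma>}"
  shows "m q \<in> planar_orbit \<sigma> p"
proof -
  obtain m' where m': "m' \<in> monoid_gen {h_sig \<sigma>, v_sig \<sigma>}" "q = m' p"
    using assms(1) unfolding planar_orbit_def by blast
  show ?thesis
    unfolding planar_orbit_def using m'(2) monoid_gen_comp[OF assms(2) m'(1)]
    by (intro image_eqI[of _ _ "m \<circ> m'"]) simp_all
qed

lemma h_sig_funpow: "(h_sig \<sigma> ^^ k) (a, b) = (a + real k * inv \<sigma> b, b)"
  by (induction k) (auto simp: h_sig_def algebra_simps)

lemma v_sig_funpow: "(v_sig \<sigma> ^^ k) (a, b) = (a, b + real k * \<sigma> a)"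
  by (induction k) (auto simp: v_sig_def algebra_simps)

lemma h_sig_funpow_in_planar_orbit:
  assumes "(a, b) \<in> planar_orbit \<sigma> p"
  shows "(a + real k * inv \<sigma> b, b) \<in> planar_orbit \<sigma> p"
proof -
  have "h_sig \<sigma> ^^ k \<in> monoid_gen {h_sig \<sigma>, v_sig \<sigma>}"
    by (intro monoid_gen_funpow monoid_gen_generator) simp
  from planar_orbit_closed[OF assms this] show ?thesis
    by (simp add: h_sig_funpow)
qed

lemma v_sig_funpow_in_planar_orbit:
  assumes "(a, b) \<in> planar_orbit \<sigma> p"
  shows "(a, b + real k * \<sigma> a) \<in> planar_orbit \<sigma> p"
proof -
  have "v_sig \<sigma> ^^ k \<in> monoid_gen {h_sig \<sigma>, v_sig \<sigma>}"
    by (intro monoid_gen_funpow monoid_gen_generator) simp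
  from planar_orbit_closed[OF assms this] show ?thesis
    by (simp add: v_sig_funpow)
qed

lemma sigma_irrational_planar_orbit_fst_nonzero:
  assumes "sigma_irrational \<sigma> p" "q \<in> planar_orbit \<sigma> p"
  shows "fst q \<noteq> 0"
proof
  assume "fst q = 0"
  then have "q \<in> Oy"
    unfolding Oy_def by (cases q) auto
  obtain m where m: "m \<in> monoid_gen {h_sig \<sigma>, v_sig \<sigma>}" "q = m p"
    using assms(2) unfolding planar_orbit_def by blast
  have "\<exists>g'\<in>{h_sig_inv \<sigma>, v_sig_inv \<sigma>}. \<forall>y. g' (g y) = y" if "g \<in> {h_sig \<sigma>, v_sig \<sigma>}" for g
    using that by (auto simp: h_sig_def h_sig_inv_def v_sig_def v_sig_inv_def)
  then obtain m' where m': "m' \<in> monoid_gen {h_sig_inv \<sigma>, v_sig_inv \<sigma>}" "\<And>y. m' (m y) = y"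
    using monoid_gen_left_inverse[OF m(1)] by blast
  have "m' ` Oy \<in> rational_lines \<sigma>"
    using m'(1) unfolding rational_lines_def by blast
  moreover have "p \<in> m' ` Oy"
    using \<open>q \<in> Oy\<close> m(2) m'(2) by (metis image_eqI)
  ultimately show False
    using assms(1) unfolding sigma_irrational_def by blast
qed

lemma Msig_lift_planar:
  assumes "i < j" "m \<in> monoid_gen {h_sig \<sigma>, v_sig \<sigma>}"
  shows "\<exists>M\<in>Msig \<sigma>. \<forall>y. M y =
    (\<chi> l. if l = i then fst (m (y $ i, y $ j)) else if l = j then snd (m (y $ i, y $ j)) else y $ l)"
  using assms(2)
proof induction
  case id_mem
  have "id \<in> Msig \<sigma>"
    unfolding Msig_def by (rule monoid_gen.id_mem)
  then show ?case
    by (intro bexI[of _ id]) (simp_all add: vec_eq_iff)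
next
  case (comp_mem g m)
  then obtain M where "M \<in> Msig \<sigma>" and M: "\<And>y. M y =
    (\<chi> l. if l = i then fst (m (y $ i, y $ j)) else if l = j then snd (m (y $ i, y $ j)) else y $ l)"
    by blast
  obtain G where "G \<in> Msig \<sigma>" and G: "\<And>y. G y =
    (\<chi> l. if l = i then fst (g (y $ i, y $ j)) else if l = j then snd (g (y $ i, y $ j)) else y $ l)"
  proof (cases "g = h_sig \<sigma>")
    case True
    have "hmap \<sigma> i j \<in> Msig \<sigma>"
      unfolding Msig_def using assms(1) by (intro monoid_gen_generator) blast
    then show ?thesis
      using True assms(1) by (intro that) (auto simp: vec_eq_iff hmap_def h_sig_def axis_def)
  next
    case False
    then have "g = v_sig \<sigma>"
      using comp_mem(1) by blast
    have "vmap \<sigma> i j \<in> Msig \<sigma>"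
      unfolding Msig_def using assms(1) by (intro monoid_gen_generator) blast
    then show ?thesis
      using \<open>g = v_sig \<sigma>\<close> assms(1) by (intro that) (auto simp: vec_eq_iff vmap_def v_sig_def axis_def)
  qed
  have "G \<circ> M \<in> Msig \<sigma>"
    using \<open>G \<in> Msig \<sigma>\<close> \<open>M \<in> Msig \<sigma>\<close> by (rule Msig_comp)
  moreover have "j \<noteq> i"
    using assms(1) by simp
  ultimately show ?case
    by (intro bexI[of _ "G \<circ> M"]) (simp_all add: G M vec_eq_iff)
qed

locale odd_homeomorphism =
  fixes \<sigma> :: "real \<Rightarrow> real"
  assumes strict_mono_sigma: "strict_mono \<sigma>"
    and odd_sigma: "\<And>t. \<sigma> (- t) = - \<sigma> t"
    and homeomorphism_sigma: "\<exists>g. homeomorphism UNIV UNIV \<sigma> g"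
begin

lemma bij_sigma: "bij \<sigma>"
  using homeomorphism_sigma unfolding homeomorphism_def bij_def inj_def
  by (metis UNIV_I image_eqI surj_def)

lemma inv_sigma_sigma [simp]: "inv \<sigma> (\<sigma> t) = t"
  by (simp add: bij_is_inj[OF bij_sigma])

lemma sigma_inv_sigma [simp]: "\<sigma> (inv \<sigma> t) = t"
  by (simp add: bij_is_surj[OF bij_sigma] surj_f_inv_f)

lemma sigma_less_iff [simp]: "\<sigma> a < \<sigma> b \<longleftrightarrow> a < b"
  using strict_mono_sigma strict_mono_less by blast

lemma inv_sigma_less_iff [simp]: "inv \<sigma> a < inv \<sigma> b \<longleftrightarrow> a < b"
  by (metis sigma_inv_sigma sigma_less_iff)

lemma sigma_0 [simp]: "\<sigma> 0 = 0"
  using odd_sigma[of 0] by simp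

lemma inv_sigma_0 [simp]: "inv \<sigma> 0 = 0"
  by (metis inv_sigma_sigma sigma_0)

lemma odd_inv_sigma: "inv \<sigma> (- t) = - inv \<sigma> t"
  by (metis inv_sigma_sigma odd_sigma sigma_inv_sigma)

lemma continuous_on_sigma: "continuous_on UNIV \<sigma>"
  using homeomorphism_sigma unfolding homeomorphism_def by blast

lemma continuous_on_inv_sigma: "continuous_on UNIV (inv \<sigma>)"
proof -
  obtain g where g: "homeomorphism UNIV UNIV \<sigma> g"
    using homeomorphism_sigma by blast
  then have "g = inv \<sigma>"
    unfolding homeomorphism_def by (metis UNIV_I ext inv_sigma_sigma)
  then show ?thesis
    using g unfolding homeomorphism_def by blast
qed

lemma move_fun_less_iff [simp]: "move_fun \<sigma> s t a < move_fun \<sigma> s t b \<longleftrightarrow> a < b"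
  by (simp add: move_fun_def)

lemma move_fun_0 [simp]: "move_fun \<sigma> s t 0 = 0"
  by (simp add: move_fun_def)

lemma move_fun_pos_iff [simp]: "0 < move_fun \<sigma> s t a \<longleftrightarrow> 0 < a"
  using move_fun_less_iff[of s t 0 a] by simp

lemma move_fun_neg_iff [simp]: "move_fun \<sigma> s t a < 0 \<longleftrightarrow> a < 0"
  using move_fun_less_iff[of s t a 0] by simp

lemma move_fun_inverse: "s \<noteq> t \<Longrightarrow> move_fun \<sigma> s t (move_fun \<sigma> t s u) = u"
  by (cases s t rule: linorder_cases) (auto simp: move_fun_def)

lemma continuous_on_move_fun: "continuous_on UNIV (move_fun \<sigma> s t)"
  by (simp add: move_fun_def continuous_on_sigma continuous_on_inv_sigma)

lemma move_fun_minus: "move_fun \<sigma> s t (- u) = - move_fun \<sigma> s t u"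
  unfolding move_fun_def using odd_sigma odd_inv_sigma by presburger

lemma abs_move_fun: "\<bar>move_fun \<sigma> s t u\<bar> = move_fun \<sigma> s t \<bar>u\<bar>"
proof (cases "0 \<le> u")
  case True
  then show ?thesis
    using move_fun_neg_iff[of s t u] by (metis abs_of_nonneg not_less)
next
  case False
  then have "u < 0" "move_fun \<sigma> s t u < 0"
    by simp_all
  then show ?thesis
    by (metis abs_of_neg move_fun_minus)
qed

lemma abs_move_fun_less:
  assumes "\<bar>u\<bar> < min (\<sigma> \<tau>) (inv \<sigma> \<tau>)"
  shows "\<bar>move_fun \<sigma> s t u\<bar> < \<tau>"
proof -
  have "\<sigma> \<bar>u\<bar> < \<tau>" "inv \<sigma> \<bar>u\<bar> < \<tau>"
    using assms sigma_less_iff[of "\<bar>u\<bar>" "inv \<sigma> \<tau>"] inv_sigma_less_iff[of "\<bar>u\<bar>" "\<sigma> \<tau>"]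
    by auto
  then show ?thesis
    unfolding abs_move_fun by (simp add: move_fun_def)
qed

lemma continuous_on_Msig: "m \<in> Msig \<sigma> \<Longrightarrow> continuous_on UNIV m"
  unfolding Msig_def
proof (erule monoid_gen_continuous)
  have coordinate: "continuous_on UNIV (\<lambda>y. f (y $ l))" if "continuous_on UNIV f" for f l
    using continuous_on_compose[OF continuous_on_component[OF continuous_on_id]
        that[THEN continuous_on_subset]]
    by (simp add: o_def)
  fix g
  assume "g \<in> {hmap \<sigma> i j |i j. i < j} \<union> {vmap \<sigma> i j |i j. i < j}"
  then obtain i j where "g = hmap \<sigma> i j \<or> g = vmap \<sigma> i j"
    by blast
  then show "continuous_on UNIV g"
    unfolding hmap_def vmap_def
    using coordinate[OF continuous_on_inv_sigma, of j] coordinate[OF continuous_on_sigma, of i]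
    by (auto intro!: continuous_on_add continuous_on_id continuous_on_scaleR continuous_on_const)
qed

lemma closure_orbit_closed:
  assumes "y \<in> closure (orbit \<sigma> x)" "m \<in> Msig \<sigma>"
  shows "m y \<in> closure (orbit \<sigma> x)"
proof -
  have "m ` closure (orbit \<sigma> x) \<subseteq> closure (orbit \<sigma> x)"
    using continuous_on_Msig[OF assms(2)] orbit_closed[OF _ assms(2)]
    by (intro image_closure_subset) (auto intro: continuous_on_subset closure_subset[THEN subsetD])
  then show ?thesis
    using assms(1) by blast
qed

lemma Msig_uminus: "m \<in> Msig \<sigma> \<Longrightarrow> m (- y) = - m y"
  unfolding Msig_def
proof (erule monoid_gen_commute)
  fix g y
  assume "g \<in> {hmap \<sigma> i j |i j. i < j} \<union> {vmap \<sigma> i j |i j. i < j}"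
  then obtain i j where "g = hmap \<sigma> i j \<or> g = vmap \<sigma> i j"
    by blast
  then show "g (- y) = - g y"
    by (elim disjE) (simp_all add: hmap_def vmap_def odd_sigma odd_inv_sigma)
qed

lemma orbit_uminus: "orbit \<sigma> (- x) = uminus ` orbit \<sigma> x"
  unfolding orbit_def image_image by (simp add: Msig_uminus cong: image_cong)

lemma sigma_irrational_uminus:
  assumes "sigma_irrational \<sigma> p"
  shows "sigma_irrational \<sigma> (- p)"
proof -
  have odd_generator: "g (- r) = - g r"
    if "g \<in> {h_sig \<sigma>, v_sig \<sigma>} \<union> {h_sig_inv \<sigma>, v_sig_inv \<sigma>}" for g r
    using that by (cases r) (auto simp: h_sig_def v_sig_def h_sig_inv_def v_sig_inv_def odd_sigma odd_inv_sigma)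
  have symmetric_image: "uminus ` m ` A \<subseteq> m ` A"
    if A: "uminus ` A \<subseteq> A" and m: "m \<in> monoid_gen G"
      and G: "G \<subseteq> {h_sig \<sigma>, v_sig \<sigma>} \<union> {h_sig_inv \<sigma>, v_sig_inv \<sigma>}" for m A G
  proof -
    have "m (- q) = - m q" for q
      using m by (rule monoid_gen_commute) (use G odd_generator in blast)
    then have "- m q = m (- q) \<and> - q \<in> A" if "q \<in> A" for q
      using A that by auto
    then show ?thesis
      by blast
  qed
  have "uminus ` Ox \<subseteq> Ox" "uminus ` Oy \<subseteq> Oy"
    unfolding Ox_def Oy_def by auto
  then have "uminus ` L \<subseteq> L" if "L \<in> rational_lines \<sigma>" for L
    using that symmetric_image unfolding rational_lines_def by blast
  then show ?thesis
    using assms unfolding sigma_irrational_def by (metis image_eqI minus_minus subsetD)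
qed

lemma planar_orbit_drain_fst:
  assumes "(a, b) \<in> planar_orbit \<sigma> p" "0 < a" "b < 0"
  shows "\<exists>a'. (a', b) \<in> planar_orbit \<sigma> p \<and> 0 < a' \<and> a' \<le> - inv \<sigma> b"
proof -
  have "0 < - inv \<sigma> b"
    using assms(3) inv_sigma_less_iff[of b 0] by simp
  then obtain k :: nat where "0 < a - real k * - inv \<sigma> b" "a - real k * - inv \<sigma> b \<le> - inv \<sigma> b"
    using exists_nat_remainder_pos[OF assms(2) \<open>0 < - inv \<sigma> b\<close>] by blast
  then show ?thesis
    using h_sig_funpow_in_planar_orbit[OF assms(1), of k] by auto
qed

lemma planar_orbit_drain_snd:
  assumes "(a, b) \<in> planar_orbit \<sigma> p" "0 < a" "b < 0"
  shows "\<exists>b'. (a, b') \<in> planar_orbit \<sigma> p \<and> - \<sigma> a \<le> b' \<and> b' < 0"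
proof -
  have "0 < \<sigma> a"
    using assms(2) sigma_less_iff[of 0 a] by simp
  then obtain k :: nat where "0 < - b - real k * \<sigma> a" "- b - real k * \<sigma> a \<le> \<sigma> a"
    using exists_nat_remainder_pos[of "- b" "\<sigma> a"] assms(3) by auto
  then show ?thesis
    using v_sig_funpow_in_planar_orbit[OF assms(1), of k] by auto
qed

text \<open>Take a point (a, b) nearly minimising a - b over the fourth-quadrant part of the orbit. As
  a + inv \<sigma> b \<noteq> 0, one of h and v keeps it in that quadrant, and this move lowers a - b by
  - inv \<sigma> b or \<sigma> a respectively; near-minimality makes that decrease small.\<close>

lemma planar_orbit_short_move:
  assumes avoid: "\<And>q. q \<in> planar_orbit \<sigma> p \<Longrightarrow> fst q \<noteq> 0"
    and "0 < fst p" "snd p < 0" "0 < \<eta>"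
  shows "\<exists>a b. (a, b) \<in> planar_orbit \<sigma> p \<and> 0 < a \<and> b < 0 \<and> (- inv \<sigma> b < \<eta> \<or> \<sigma> a < \<eta>)"
proof -
  define T where "T = {q \<in> planar_orbit \<sigma> p. 0 < fst q \<and> snd q < 0}"
  have "p \<in> T"
    using assms(2,3) planar_orbit_self unfolding T_def by simp
  then obtain q where "q \<in> T" and near: "\<forall>q'\<in>T. fst q - snd q < fst q' - snd q' + \<eta>"
    using exists_near_minimiser[of p T 0 "\<lambda>q. fst q - snd q"] \<open>0 < \<eta>\<close> unfolding T_def by force
  then obtain a b where "q = (a, b)" and orbit: "(a, b) \<in> planar_orbit \<sigma> p" and "0 < a" "b < 0"
    unfolding T_def by (cases q) auto
  have "a + inv \<sigma> b \<noteq> 0"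
    using avoid[OF h_sig_funpow_in_planar_orbit[OF orbit, of 1]] by simp
  then consider "0 < a + inv \<sigma> b" | "a + inv \<sigma> b < 0"
    by linarith
  then have "- inv \<sigma> b < \<eta> \<or> \<sigma> a < \<eta>"
  proof cases
    case 1
    then have "(a + inv \<sigma> b, b) \<in> T"
      using h_sig_funpow_in_planar_orbit[OF orbit, of 1] \<open>b < 0\<close> unfolding T_def by simp
    then show ?thesis
      using near \<open>q = (a, b)\<close> by fastforce
  next
    case 2
    then have "inv \<sigma> b < inv \<sigma> (- \<sigma> a)"
      by (simp add: odd_sigma[symmetric])
    then have "(a, b + \<sigma> a) \<in> T"
      using v_sig_funpow_in_planar_orbit[OF orbit, of 1] \<open>0 < a\<close> unfolding T_def by simp
    then show ?thesis
      using near \<open>q = (a, b)\<close> by fastforce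
  qed
  then show ?thesis
    using orbit \<open>0 < a\<close> \<open>b < 0\<close> by blast
qed

lemma planar_orbit_near_origin:
  assumes avoid: "\<And>q. q \<in> planar_orbit \<sigma> p \<Longrightarrow> fst q \<noteq> 0"
    and "0 < fst p" "snd p < 0" "0 < \<delta>"
  shows "\<exists>q\<in>planar_orbit \<sigma> p. 0 < fst q \<and> fst q < \<delta> \<and> - \<delta> < snd q \<and> snd q < 0"
proof -
  define \<eta> where "\<eta> = min \<delta> (min (inv \<sigma> \<delta>) (\<sigma> \<delta>))"
  have "0 < \<eta>"
    using \<open>0 < \<delta>\<close> inv_sigma_less_iff[of 0 \<delta>] sigma_less_iff[of 0 \<delta>] unfolding \<eta>_def by simp
  then obtain a b where orbit: "(a, b) \<in> planar_orbit \<sigma> p" and "0 < a" "b < 0"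
    and "- inv \<sigma> b < \<eta> \<or> \<sigma> a < \<eta>"
    using planar_orbit_short_move[OF assms(1-3)] by blast
  then consider "- inv \<sigma> b < \<eta>" | "\<sigma> a < \<eta>"
    by blast
  then show ?thesis
  proof cases
    case 1
    then have "inv \<sigma> (- b) < inv \<sigma> \<delta>" "- inv \<sigma> b < \<delta>"
      unfolding \<eta>_def odd_inv_sigma by linarith+
    moreover obtain a' where "(a', b) \<in> planar_orbit \<sigma> p" "0 < a'" "a' \<le> - inv \<sigma> b"
      using planar_orbit_drain_fst[OF orbit \<open>0 < a\<close> \<open>b < 0\<close>] by blast
    ultimately show ?thesis
      using \<open>b < 0\<close> by (intro bexI[of _ "(a', b)"]) auto
  next
    case 2
    then have "\<sigma> a < \<sigma> \<delta>" "\<sigma> a < \<delta>"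
      unfolding \<eta>_def by linarith+
    moreover obtain b' where "(a, b') \<in> planar_orbit \<sigma> p" "- \<sigma> a \<le> b'" "b' < 0"
      using planar_orbit_drain_snd[OF orbit \<open>0 < a\<close> \<open>b < 0\<close>] by blast
    ultimately show ?thesis
      using \<open>0 < a\<close> by (intro bexI[of _ "(a, b')"]) auto
  qed
qed

lemma elementary_move_funpow_approx:
  assumes "s \<noteq> t" "y $ s \<noteq> 0" "0 \<le> (g - y $ t) * y $ s"
  shows "\<exists>N. \<bar>(elementary_move \<sigma> s t ^^ N) y $ t - g\<bar> < \<bar>move_fun \<sigma> s t (y $ s)\<bar>"
proof -
  define d where "d = move_fun \<sigma> s t (y $ s)"
  have "0 < y $ s \<and> 0 < d \<or> y $ s < 0 \<and> d < 0"
    using assms(2) unfolding d_def by (auto simp: linorder_neq_iff)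
  then have "d \<noteq> 0" "0 \<le> (g - y $ t) * d"
    using assms(3) by (auto simp: zero_le_mult_iff)
  then obtain N :: nat where "\<bar>y $ t + real N * d - g\<bar> < \<bar>d\<bar>"
    using exists_nat_mult_approx by blast
  then show ?thesis
    using elementary_move_funpow_nth[OF assms(1)] unfolding d_def by auto
qed

lemma Msig_approx_coordinates:
  assumes "i \<noteq> j" "0 < y $ i" "y $ j < 0"
    and small: "\<And>t. \<bar>move_fun \<sigma> i t (y $ i)\<bar> < B" "\<And>t. \<bar>move_fun \<sigma> j t (y $ j)\<bar> < B"
    and "i \<notin> L" "j \<notin> L"
  shows "\<exists>m\<in>Msig \<sigma>. (\<forall>l. l \<notin> L \<longrightarrow> m y $ l = y $ l) \<and> (\<forall>l\<in>L. \<bar>m y $ l - g l\<bar> < B)"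
  using finite[of L] assms(6,7)
proof (induction L rule: finite_induct)
  case empty
  have "id \<in> Msig \<sigma>"
    unfolding Msig_def by (rule monoid_gen.id_mem)
  then show ?case
    by (intro bexI[of _ id]) simp_all
next
  case (insert t L)
  then obtain m where "m \<in> Msig \<sigma>" and m: "\<forall>l. l \<notin> L \<longrightarrow> m y $ l = y $ l" "\<forall>l\<in>L. \<bar>m y $ l - g l\<bar> < B"
    by auto
  have "t \<noteq> i" "t \<noteq> j" "m y $ i = y $ i" "m y $ j = y $ j"
    using insert m(1) by auto
  obtain s where "s = i \<or> s = j" "0 \<le> (g t - m y $ t) * m y $ s"
    using \<open>m y $ i = y $ i\<close> \<open>m y $ j = y $ j\<close> assms(2,3)
    by (metis linorder_le_less_linear mult_nonpos_nonpos order.strict_implies_order zero_le_mult_iff)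
  then have "s \<noteq> t" "m y $ s \<noteq> 0" "\<bar>move_fun \<sigma> s t (m y $ s)\<bar> < B"
    using \<open>t \<noteq> i\<close> \<open>t \<noteq> j\<close> \<open>m y $ i = y $ i\<close> \<open>m y $ j = y $ j\<close> assms(2,3) small by auto
  moreover obtain N
    where "\<bar>(elementary_move \<sigma> s t ^^ N) (m y) $ t - g t\<bar> < \<bar>move_fun \<sigma> s t (m y $ s)\<bar>"
    using elementary_move_funpow_approx \<open>s \<noteq> t\<close> \<open>m y $ s \<noteq> 0\<close> \<open>0 \<le> (g t - m y $ t) * m y $ s\<close>
    by blast
  ultimately have N: "\<bar>(elementary_move \<sigma> s t ^^ N) (m y) $ t - g t\<bar> < B"
    by linarith
  have "(elementary_move \<sigma> s t ^^ N) \<circ> m \<in> Msig \<sigma>"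
    using elementary_move_funpow_in_Msig[OF \<open>s \<noteq> t\<close>] \<open>m \<in> Msig \<sigma>\<close> by (rule Msig_comp)
  then show ?case
    using m N elementary_move_funpow_nth[OF \<open>s \<noteq> t\<close>]
    by (intro bexI[of _ "(elementary_move \<sigma> s t ^^ N) \<circ> m"]) auto
qed

lemma Msig_pair_near_origin:
  assumes "i < j" "0 < x $ i" "x $ j < 0" "sigma_irrational \<sigma> (x $ i, x $ j)" "0 < \<delta>"
  shows "\<exists>M\<in>Msig \<sigma>. 0 < M x $ i \<and> M x $ i < \<delta> \<and> - \<delta> < M x $ j \<and> M x $ j < 0"
proof -
  have "\<exists>p\<in>planar_orbit \<sigma> (x $ i, x $ j). 0 < fst p \<and> fst p < \<delta> \<and> - \<delta> < snd p \<and> snd p < 0"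
    using planar_orbit_near_origin[where p = "(x $ i, x $ j)",
        OF sigma_irrational_planar_orbit_fst_nonzero[OF assms(4)]] assms(2,3,5)
    by simp
  then obtain p where p: "p \<in> planar_orbit \<sigma> (x $ i, x $ j)"
    and "0 < fst p" "fst p < \<delta>" "- \<delta> < snd p" "snd p < 0"
    by blast
  obtain m where m: "m \<in> monoid_gen {h_sig \<sigma>, v_sig \<sigma>}" "p = m (x $ i, x $ j)"
    using p unfolding planar_orbit_def by blast
  obtain M where "M \<in> Msig \<sigma>" and M: "\<forall>y. M y = (\<chi> l. if l = i then fst (m (y $ i, y $ j))
      else if l = j then snd (m (y $ i, y $ j)) else y $ l)"
    using Msig_lift_planar[OF assms(1) m(1)] by blast
  have "M x $ i = fst p" "M x $ j = snd p"
    using M m(2) assms(1) by auto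
  with \<open>M \<in> Msig \<sigma>\<close> show ?thesis
    using \<open>0 < fst p\<close> \<open>fst p < \<delta>\<close> \<open>- \<delta> < snd p\<close> \<open>snd p < 0\<close> by (intro bexI[of _ M]) auto
qed

lemma slab_subset_closure_orbit:
  assumes "i < j" "0 < x $ i" "x $ j < 0" "sigma_irrational \<sigma> (x $ i, x $ j)"
    and "w $ j = 0" "w $ i < 0"
  shows "w \<in> closure (orbit \<sigma> x)"
proof (rule mem_closure_if_coordinatewise_approachable)
  fix e :: real
  assume "0 < e"
  have "i \<noteq> j" "j \<noteq> i"
    using assms(1) by auto
  define \<delta> where "\<delta> = min e (min (\<sigma> e) (inv \<sigma> e))"
  have "0 < \<delta>"
    using \<open>0 < e\<close> sigma_less_iff[of 0 e] inv_sigma_less_iff[of 0 e] unfolding \<delta>_def by simp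
  then obtain M where "M \<in> Msig \<sigma>" and pivots: "0 < M x $ i" "M x $ j < 0"
    and "M x $ i < \<delta>" "- \<delta> < M x $ j"
    using Msig_pair_near_origin[OF assms(1-4)] by blast
  then have small: "\<bar>move_fun \<sigma> s t (M x $ i)\<bar> < e" "\<bar>move_fun \<sigma> s t (M x $ j)\<bar> < e" for s t
    unfolding \<delta>_def by (auto intro!: abs_move_fun_less)
  obtain m where "m \<in> Msig \<sigma>" and m: "\<forall>l. l \<notin> - {i, j} \<longrightarrow> m (M x) $ l = M x $ l"
    "\<forall>l\<in>- {i, j}. \<bar>m (M x) $ l - w $ l\<bar> < e"
    using Msig_approx_coordinates[OF \<open>i \<noteq> j\<close> pivots small(1)[of i] small(2)[of j],
        of "- {i, j}" "\<lambda>l. w $ l"]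
    by auto
  have "m (M x) $ j \<noteq> 0" "0 \<le> (w $ i - m (M x) $ i) * m (M x) $ j"
    using m(1) pivots \<open>w $ i < 0\<close> by (auto intro: mult_nonpos_nonpos)
  then obtain N
    where "\<bar>(elementary_move \<sigma> j i ^^ N) (m (M x)) $ i - w $ i\<bar> < \<bar>move_fun \<sigma> j i (m (M x) $ j)\<bar>"
    using elementary_move_funpow_approx[OF \<open>j \<noteq> i\<close>] by blast
  moreover have "\<bar>move_fun \<sigma> j i (m (M x) $ j)\<bar> < e"
    using small(2) m(1) by simp
  ultimately have N: "\<bar>(elementary_move \<sigma> j i ^^ N) (m (M x)) $ i - w $ i\<bar> < e"
    by linarith
  define z where "z = (elementary_move \<sigma> j i ^^ N) (m (M x))"
  have "(elementary_move \<sigma> j i ^^ N) \<circ> m \<circ> M \<in> Msig \<sigma>"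
    using elementary_move_funpow_in_Msig[OF \<open>j \<noteq> i\<close>] \<open>m \<in> Msig \<sigma>\<close> \<open>M \<in> Msig \<sigma>\<close>
    by (intro Msig_comp)
  then have "z \<in> orbit \<sigma> x"
    unfolding z_def orbit_def by (rule rev_image_eqI) simp
  moreover have "\<bar>z $ l - w $ l\<bar> < e" for l
    using N m pivots \<open>w $ j = 0\<close> \<open>- \<delta> < M x $ j\<close> elementary_move_funpow_nth[OF \<open>j \<noteq> i\<close>]
    unfolding z_def \<delta>_def by (cases "l = i"; cases "l = j") auto
  ultimately show "\<exists>z\<in>orbit \<sigma> x. \<forall>l. \<bar>z $ l - w $ l\<bar> < e"
    by blast
qed

text \<open>From the slab point agreeing with y off the coordinates j and k, with vanishing j-th
  coordinate and k-th coordinate \<open>move_fun \<sigma> j k u\<close>, N moves from k to j followed by K moves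
  from i to j restore the j-th coordinate y j, because N u = y j + K v.\<close>

lemma slab_moves_in_closure_orbit:
  assumes "i \<noteq> j" "k \<noteq> i" "k \<noteq> j"
    and slab: "\<And>w. w $ j = 0 \<Longrightarrow> w $ i < 0 \<Longrightarrow> w \<in> closure (orbit \<sigma> x)"
    and "y $ i < 0" "0 < N" "v = - move_fun \<sigma> i j (y $ i)"
  shows "(\<chi> l. if l = k then move_fun \<sigma> j k ((y $ j + real K * v) / real N) else y $ l)
    \<in> closure (orbit \<sigma> x)"
proof -
  define u where "u = (y $ j + real K * v) / real N"
  define w where "w = (\<chi> l. if l = j then 0 else if l = k then move_fun \<sigma> j k u else y $ l)"
  have "w \<in> closure (orbit \<sigma> x)"
    using assms(1,2,5) by (intro slab) (simp_all add: w_def)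
  then have "(elementary_move \<sigma> k j ^^ N) w \<in> closure (orbit \<sigma> x)"
    using elementary_move_funpow_in_Msig[OF assms(3)] by (rule closure_orbit_closed)
  then have "(elementary_move \<sigma> i j ^^ K) ((elementary_move \<sigma> k j ^^ N) w) \<in> closure (orbit \<sigma> x)"
    using elementary_move_funpow_in_Msig[OF assms(1)] by (rule closure_orbit_closed)
  moreover have "(elementary_move \<sigma> i j ^^ K) ((elementary_move \<sigma> k j ^^ N) w) =
      (\<chi> l. if l = k then move_fun \<sigma> j k u else y $ l)"
    using assms(1,2,3,6,7)
    by (simp add: vec_eq_iff elementary_move_funpow_nth move_fun_inverse w_def u_def)
  ultimately show ?thesis
    unfolding u_def by simp
qed

lemma quadrant_subset_closure_orbit:
  assumes "i \<noteq> j" "k \<noteq> i" "k \<noteq> j"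
    and slab: "\<And>w. w $ j = 0 \<Longrightarrow> w $ i < 0 \<Longrightarrow> w \<in> closure (orbit \<sigma> x)"
    and "y $ i < 0" "0 < y $ k"
  shows "y \<in> closure (orbit \<sigma> x)"
proof -
  define U where "U = {u. (\<chi> l. if l = k then move_fun \<sigma> j k u else y $ l) \<in> closure (orbit \<sigma> x)}"
  define v where "v = - move_fun \<sigma> i j (y $ i)"
  have "closed U"
    unfolding U_def by (rule closed_coordinate_line_vimage[OF closed_closure continuous_on_move_fun])
  have "0 < v" "0 < move_fun \<sigma> k j (y $ k)"
    using assms(5,6) unfolding v_def by simp_all
  have "move_fun \<sigma> k j (y $ k) \<in> closure U"
    unfolding closure_approachable
  proof (intro allI impI)
    fix \<epsilon> :: real
    assume "0 < \<epsilon>"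
    then obtain N K :: nat
      where "0 < N" "\<bar>(y $ j + real K * v) / real N - move_fun \<sigma> k j (y $ k)\<bar> < \<epsilon>"
      using exists_nat_ratio_approx[OF \<open>0 < v\<close> \<open>0 < move_fun \<sigma> k j (y $ k)\<close>] by blast
    then show "\<exists>u\<in>U. dist u (move_fun \<sigma> k j (y $ k)) < \<epsilon>"
      using slab_moves_in_closure_orbit[OF assms(1-3) slab assms(5) _ v_def, of N K]
      unfolding U_def by (auto simp: dist_real_def)
  qed
  then have "(\<chi> l. if l = k then move_fun \<sigma> j k (move_fun \<sigma> k j (y $ k)) else y $ l)
      \<in> closure (orbit \<sigma> x)"
    using \<open>closed U\<close> unfolding U_def by simp
  moreover have "(\<chi> l. if l = k then move_fun \<sigma> j k (move_fun \<sigma> k j (y $ k)) else y $ l) = y"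
    using assms(3) by (simp add: vec_eq_iff move_fun_inverse)
  ultimately show ?thesis
    by simp
qed

lemma elementary_move_preimage_in_closure_orbit:
  assumes "s \<noteq> t" "z $ s \<noteq> 0"
    and preimages: "\<And>w. \<forall>l. l \<noteq> t \<longrightarrow> w $ l = z $ l \<Longrightarrow> w $ t * z $ s < 0 \<Longrightarrow> w \<in> closure (orbit \<sigma> x)"
  shows "z \<in> closure (orbit \<sigma> x)"
proof -
  define d where "d = move_fun \<sigma> s t (z $ s)"
  have sign: "0 < z $ s \<and> 0 < d \<or> z $ s < 0 \<and> d < 0"
    using assms(2) unfolding d_def by (auto simp: linorder_neq_iff)
  then have "0 < d * d"
    by (auto simp: zero_less_mult_iff)
  then obtain N :: nat where "z $ t * d < real N * (d * d)"
    using ex_less_of_nat_mult by blast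
  define w where "w = (\<chi> l. if l = t then z $ t - real N * d else z $ l)"
  have "(z $ t - real N * d) * d < 0"
    using \<open>z $ t * d < real N * (d * d)\<close> by (simp add: algebra_simps)
  then have "w $ t * z $ s < 0"
    using sign unfolding w_def by (auto simp: mult_less_0_iff)
  then have "w \<in> closure (orbit \<sigma> x)"
    by (intro preimages) (simp_all add: w_def)
  moreover have "(elementary_move \<sigma> s t ^^ N) w = z"
    using assms(1) by (simp add: vec_eq_iff elementary_move_funpow_nth w_def d_def)
  ultimately show ?thesis
    using closure_orbit_closed elementary_move_funpow_in_Msig[OF assms(1)] by metis
qed

lemma coordinate_nonzero_in_closure_orbit:
  assumes "i \<noteq> j" "k \<noteq> i" "k \<noteq> j"
    and quadrant: "\<And>y. y $ i < 0 \<Longrightarrow> 0 < y $ k \<Longrightarrow> y \<in> closure (orbit \<sigma> x)"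
    and "z $ j \<noteq> 0"
  shows "z \<in> closure (orbit \<sigma> x)"
proof (cases "z $ j < 0")
  case True
  show ?thesis
  proof (rule elementary_move_preimage_in_closure_orbit[of j k])
    fix w
    assume w: "\<forall>l. l \<noteq> k \<longrightarrow> w $ l = z $ l" "w $ k * z $ j < 0"
    then have "0 < w $ k"
      using True by (simp add: mult_less_0_iff)
    show "w \<in> closure (orbit \<sigma> x)"
    proof (rule elementary_move_preimage_in_closure_orbit[of k i])
      show "w' \<in> closure (orbit \<sigma> x)"
        if "\<forall>l. l \<noteq> i \<longrightarrow> w' $ l = w $ l" "w' $ i * w $ k < 0" for w'
        using that \<open>0 < w $ k\<close> assms(2) by (intro quadrant) (auto simp: mult_less_0_iff)
    qed (use assms \<open>0 < w $ k\<close> in auto)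
  qed (use assms in auto)
next
  case False
  then have "0 < z $ j"
    using assms(5) by simp
  show ?thesis
  proof (rule elementary_move_preimage_in_closure_orbit[of j i])
    fix w
    assume w: "\<forall>l. l \<noteq> i \<longrightarrow> w $ l = z $ l" "w $ i * z $ j < 0"
    then have "w $ i < 0"
      using \<open>0 < z $ j\<close> by (simp add: mult_less_0_iff)
    show "w \<in> closure (orbit \<sigma> x)"
    proof (rule elementary_move_preimage_in_closure_orbit[of i k])
      show "w' \<in> closure (orbit \<sigma> x)"
        if "\<forall>l. l \<noteq> k \<longrightarrow> w' $ l = w $ l" "w' $ k * w $ i < 0" for w'
        using that \<open>w $ i < 0\<close> assms(2) by (intro quadrant) (auto simp: mult_less_0_iff)
    qed (use assms \<open>w $ i < 0\<close> in auto)
  qed (use assms in auto)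
qed

lemma closure_orbit_eq_UNIV_if_pos_neg:
  assumes "i < j" "k \<noteq> i" "k \<noteq> j" "0 < x $ i" "x $ j < 0" "sigma_irrational \<sigma> (x $ i, x $ j)"
  shows "closure (orbit \<sigma> x) = UNIV"
proof -
  have "i \<noteq> j"
    using assms(1) by simp
  have slab: "w \<in> closure (orbit \<sigma> x)" if "w $ j = 0" "w $ i < 0" for w
    using slab_subset_closure_orbit[OF assms(1,4-6) that] .
  have "y \<in> closure (orbit \<sigma> x)" if "y $ i < 0" "0 < y $ k" for y
    using quadrant_subset_closure_orbit[OF \<open>i \<noteq> j\<close> assms(2,3) slab that] .
  then show ?thesis
    using coordinate_nonzero_in_closure_orbit[OF \<open>i \<noteq> j\<close> assms(2,3)]
    by (intro closure_eq_UNIV_if_coordinate_nonzero) blast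
qed

lemma closure_orbit_eq_UNIV:
  assumes "i < j" "k \<noteq> i" "k \<noteq> j" "x $ i * x $ j < 0" "sigma_irrational \<sigma> (x $ i, x $ j)"
  shows "closure (orbit \<sigma> x) = UNIV"
proof -
  consider "0 < x $ i" "x $ j < 0" | "0 < (- x) $ i" "(- x) $ j < 0"
    using assms(4) by (auto simp: mult_less_0_iff)
  then show ?thesis
  proof cases
    case 1
    then show ?thesis
      using closure_orbit_eq_UNIV_if_pos_neg[OF assms(1-3) _ _ assms(5)] by blast
  next
    case 2
    moreover have "sigma_irrational \<sigma> ((- x) $ i, (- x) $ j)"
      using sigma_irrational_uminus[OF assms(5)] by simp
    ultimately show ?thesis
      using closure_orbit_eq_UNIV_if_pos_neg[OF assms(1-3)] closure_uminus_eq_UNIV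
      by (metis orbit_uminus)
  qed
qed

end

theorem theorem5:
  fixes \<sigma> :: "real \<Rightarrow> real" and x :: "real^'n::{finite,linorder}" and i j :: 'n
  assumes "CARD('n) \<ge> 3"
    and "strict_mono \<sigma>"
    and "\<forall>t. \<sigma> (- t) = - \<sigma> t"
    and "\<exists>g. homeomorphism UNIV UNIV \<sigma> g"
    and "i < j"
    and "x $ i * x $ j < 0"
    and "sigma_irrational \<sigma> (x $ i, x $ j)"
  shows "closure ((\<lambda>m. m x) ` Msig \<sigma>) = UNIV"
proof -
  interpret odd_homeomorphism \<sigma>
    using assms(2-4) by unfold_locales auto
  obtain k where "k \<noteq> i" "k \<noteq> j"
    using exists_third_index[OF assms(1)] by blast
  then show ?thesis
    using closure_orbit_eq_UNIV[OF assms(5) _ _ assms(6,7)] unfolding orbit_def by blast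
qed

end
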